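(* Let $\mathcal L\subseteq\mathfrak P(S)$ be an algebraic lattice of sets, endowed with its Zariski topology, and let $\mathcal L_\mathrm{fin}$ be the set of its finitely generated elements. Then: (1) $\mathcal L$ with the Zariski topology is locally with maximum; (2) $\mathcal L_\mathrm{fin}$ is dense in $\mathcal L$ with respect to the constructible topology; (3) $\mathcal L_\mathrm{fin}$, with the subspace Zariski topology, is a spectral space if and only if $\mathcal L_\mathrm{fin}=\mathcal L$.
   Context: $S$ is a nonempty set. A family $\mathcal L\subseteq\mathfrak P(S)$ is an algebraic lattice of sets if it is closed under arbitrary intersections (so $S\in\mathcal L$) and under nonempty up-directed unions. For $F\subseteq S$ let $F^c$ be the intersection of all members of $\mathcal L$ containing $F$; an element $A\in\mathcal L$ is finitely generated if $A=F^c$ for some finite $F\subseteq S$. The Zariski topology on $\mathcal L$ has as basis of open sets the sets $\{A\in\mathcal L\mid G\subseteq A\}$, $G\subseteq S$ finite; with it $\mathcal L$ is a spectral space, and its specialization order is reverse inclusion. A spectral space is locally with maximum if every point has a local basis of open sets each having a maximum in the specialization order ($x\leq y$ iff $y\in\mathrm{Cl}(\{x\})$). The constructible topology is the coarsest topology in which all open quasi-compact sets are clopen. *)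

theory Defs
  imports "HOL-Analysis.Analysis"
begin

definition algebraic_lattice_of_sets :: "'a set \<Rightarrow> 'a set set \<Rightarrow> bool" where
  "algebraic_lattice_of_sets S L \<longleftrightarrow>
     L \<subseteq> Pow S \<and> S \<in> L \<and>
     (\<forall>M. M \<subseteq> L \<and> M \<noteq> {} \<longrightarrow> \<Inter>M \<in> L) \<and>
     (\<forall>M. M \<subseteq> L \<and> M \<noteq> {} \<and> (\<forall>A\<in>M. \<forall>B\<in>M. \<exists>C\<in>M. A \<union> B \<subseteq> C) \<longrightarrow> \<Union>M \<in> L)"

definition lat_closure :: "'a set \<Rightarrow> 'a set set \<Rightarrow> 'a set \<Rightarrow> 'a set" where
  "lat_closure S L F = S \<inter> \<Inter>{A \<in> L. F \<subseteq> A}"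

definition finitely_generated_elems :: "'a set \<Rightarrow> 'a set set \<Rightarrow> 'a set set" where
  "finitely_generated_elems S L = {A \<in> L. \<exists>F. finite F \<and> F \<subseteq> S \<and> A = lat_closure S L F}"

definition zariski_topology :: "'a set \<Rightarrow> 'a set set \<Rightarrow> 'a set topology" where
  "zariski_topology S L = topology_generated_by {{A \<in> L. G \<subseteq> A} | G. finite G \<and> G \<subseteq> S}"

definition specializes :: "'b topology \<Rightarrow> 'b \<Rightarrow> 'b \<Rightarrow> bool" where
  "specializes T x y \<longleftrightarrow> y \<in> T closure_of {x}"

definition locally_with_maximum :: "'b topology \<Rightarrow> bool" where
  "locally_with_maximum T \<longleftrightarrow>
     (\<forall>x U. openin T U \<and> x \<in> U \<longrightarrow>
        (\<exists>V. openin T V \<and> x \<in> V \<and> V \<subseteq> U \<and> (\<exists>m\<in>V. \<forall>y\<in>V. specializes T y m)))"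

definition irreducible_in :: "'b topology \<Rightarrow> 'b set \<Rightarrow> bool" where
  "irreducible_in T C \<longleftrightarrow> C \<noteq> {} \<and> C \<subseteq> topspace T \<and>
     (\<forall>C1 C2. closedin T C1 \<and> closedin T C2 \<and> C \<subseteq> C1 \<union> C2 \<longrightarrow> C \<subseteq> C1 \<or> C \<subseteq> C2)"

definition spectral_space :: "'b topology \<Rightarrow> bool" where
  "spectral_space T \<longleftrightarrow>
     compact_space T \<and> t0_space T \<and>
     (\<forall>U V. openin T U \<and> compactin T U \<and> openin T V \<and> compactin T V \<longrightarrow> compactin T (U \<inter> V)) \<and>
     (\<forall>U x. openin T U \<and> x \<in> U \<longrightarrow> (\<exists>V. openin T V \<and> compactin T V \<and> x \<in> V \<and> V \<subseteq> U)) \<and>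
     (\<forall>C. closedin T C \<and> irreducible_in T C \<longrightarrow> (\<exists>x\<in>C. C = T closure_of {x}))"

definition constructible_topology :: "'b topology \<Rightarrow> 'b topology" where
  "constructible_topology T = topology_generated_by
     ({topspace T} \<union> {U. openin T U \<and> compactin T U} \<union>
      {topspace T - U | U. openin T U \<and> compactin T U})"

end

theory Submission
  imports Defs
begin

text \<open>For finite \<open>G \<subseteq> S\<close> the basic open set \<open>{A \<in> L. G \<subseteq> A}\<close> is the up-set of the
  finitely generated element \<open>G\<^sup>c\<close>; so \<open>G\<^sup>c\<close> is its maximum in the specialization order, and
  every open cover of it is refined by the one member that contains \<open>G\<^sup>c\<close>. Every \<open>A \<in> L\<close> is the
  limit of the net \<open>F\<^sup>c\<close>, \<open>F\<close> running through the finite subsets of \<open>A\<close>, in the constructible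
  topology, so the finitely generated elements are constructibly dense. If they formed a spectral
  space, the irreducible closed set of finitely generated elements below \<open>A\<close> would have a
  generic point, and that point can only be \<open>A\<close>. Conversely \<open>L\<close> itself is spectral: by
  irreducibility every finite subset of the union of an irreducible closed set \<open>C\<close> lies in a
  member of \<open>C\<close>, so this union is a directed union of closures of finite sets, belongs to \<open>C\<close>,
  and is its generic point.\<close>

lemma limitin_topology_generated_by:
  assumes "l \<in> \<Union>\<S>" and basis: "\<And>U. U \<in> \<S> \<Longrightarrow> l \<in> U \<Longrightarrow> eventually (\<lambda>x. f x \<in> U) F"
  shows "limitin (topology_generated_by \<S>) f l F"
proof -
  let ?P = "\<lambda>U. l \<in> U \<longrightarrow> eventually (\<lambda>x. f x \<in> U) F"
  have "istopology ?P"
    unfolding istopology_def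
  proof (intro conjI allI impI)
    fix U V assume "?P U" "?P V" "l \<in> U \<inter> V"
    then show "eventually (\<lambda>x. f x \<in> U \<inter> V) F"
      by (auto intro: eventually_conj)
  next
    fix \<K> assume "\<forall>U\<in>\<K>. ?P U" "l \<in> \<Union>\<K>"
    then obtain U where "U \<in> \<K>" "eventually (\<lambda>x. f x \<in> U) F" by blast
    then show "eventually (\<lambda>x. f x \<in> \<Union>\<K>) F" by (auto elim: eventually_mono)
  qed
  then have "?P U" if "generate_topology_on \<S> U" for U
    using generate_topology_on_coarsest[of ?P \<S> U] basis that by blast
  then show ?thesis
    unfolding limitin_def openin_topology_generated_by_iff using assms(1) by simp
qed

lemma topspace_constructible_topology [simp]:
  "topspace (constructible_topology X) = topspace X"
  unfolding constructible_topology_def topology_generated_by_topspace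
  using openin_subset by auto

lemma irreducible_inI_common_generization:
  assumes "C \<noteq> {}" and "C \<subseteq> topspace X"
    and "\<And>x y. x \<in> C \<Longrightarrow> y \<in> C \<Longrightarrow> \<exists>z\<in>C. x \<in> X closure_of {z} \<and> y \<in> X closure_of {z}"
  shows "irreducible_in X C"
  unfolding irreducible_in_def
proof (intro conjI assms allI impI)
  fix C1 C2 assume "closedin X C1 \<and> closedin X C2 \<and> C \<subseteq> C1 \<union> C2"
  then have closed: "closedin X C1" "closedin X C2" and cover: "C \<subseteq> C1 \<union> C2" by auto
  show "C \<subseteq> C1 \<or> C \<subseteq> C2"
  proof (rule ccontr)
    assume "\<not> (C \<subseteq> C1 \<or> C \<subseteq> C2)"
    then obtain x y where "x \<in> C" "x \<notin> C1" "y \<in> C" "y \<notin> C2" by blast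
    then obtain z where "z \<in> C" "x \<in> X closure_of {z}" "y \<in> X closure_of {z}"
      using assms(3) by blast
    moreover have "z \<in> C1 \<or> z \<in> C2" using \<open>z \<in> C\<close> cover by blast
    ultimately show False
      using closure_of_minimal[of "{z}" C1 X] closure_of_minimal[of "{z}" C2 X] closed
        \<open>x \<notin> C1\<close> \<open>y \<notin> C2\<close> by blast
  qed
qed

locale set_system =
  fixes S :: "'a set" and L :: "'a set set"
  assumes subset_Pow: "L \<subseteq> Pow S"
begin

abbreviation zariski :: "'a set topology" where
  "zariski \<equiv> zariski_topology S L"

definition basic_open :: "'a set \<Rightarrow> 'a set set" where
  "basic_open G = {A \<in> L. G \<subseteq> A}"

abbreviation basic_opens :: "'a set set set" where
  "basic_opens \<equiv> {basic_open G | G. finite G \<and> G \<subseteq> S}"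

lemma mem_basic_open [simp]: "A \<in> basic_open G \<longleftrightarrow> A \<in> L \<and> G \<subseteq> A"
  by (simp add: basic_open_def)

lemma basic_opens_Int:
  assumes "X \<in> basic_opens" "Y \<in> basic_opens"
  shows "X \<inter> Y \<in> basic_opens"
proof -
  obtain G H where "finite G" "G \<subseteq> S" "X = basic_open G" "finite H" "H \<subseteq> S" "Y = basic_open H"
    using assms by blast
  moreover have "basic_open G \<inter> basic_open H = basic_open (G \<union> H)" by auto
  ultimately show ?thesis by blast
qed

lemma zariski_topology_eq:
  "zariski = topology_generated_by basic_opens"
  by (simp add: zariski_topology_def basic_open_def)

lemma topspace_zariski [simp]: "topspace zariski = L"
proof -
  have "L = basic_open {}" by auto
  then have "L \<in> basic_opens" by blast
  then show ?thesis unfolding zariski_topology_eq topology_generated_by_topspace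
    by (auto simp: basic_open_def)
qed

lemma openin_basic_open: "finite G \<Longrightarrow> G \<subseteq> S \<Longrightarrow> openin zariski (basic_open G)"
  unfolding zariski_topology_eq by (rule topology_generated_by_Basis) blast

lemma openin_zariski_upward:
  assumes "openin zariski U" "A \<in> U" "B \<in> L" "A \<subseteq> B"
  shows "B \<in> U"
proof -
  let ?P = "\<lambda>U. \<forall>A\<in>U. \<forall>B\<in>L. A \<subseteq> B \<longrightarrow> B \<in> U"
  have "istopology ?P"
    unfolding istopology_def by blast
  moreover have "?P V" if "V \<in> basic_opens" for V
    using that unfolding basic_open_def by blast
  moreover have "generate_topology_on basic_opens U"
    using assms(1) unfolding zariski_topology_eq openin_topology_generated_by_iff .
  ultimately have "?P U" by (rule generate_topology_on_coarsest)
  with assms(2-4) show ?thesis by blast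
qed

lemma closedin_zariski_downward:
  assumes "closedin zariski C" "A \<in> C" "B \<in> L" "B \<subseteq> A"
  shows "B \<in> C"
proof (rule ccontr)
  assume "B \<notin> C"
  have "A \<in> L" using closedin_subset[OF assms(1)] assms(2) by auto
  moreover have "openin zariski (L - C)" using assms(1) by (simp add: closedin_def)
  ultimately have "A \<in> L - C"
    using openin_zariski_upward[of "L - C" B A] \<open>B \<notin> C\<close> assms(3,4) by simp
  with assms(2) show False by simp
qed

lemma closure_of_singleton_zariski:
  assumes "x \<in> L"
  shows "zariski closure_of {x} = {y \<in> L. y \<subseteq> x}"
proof (intro set_eqI iffI)
  fix y assume y: "y \<in> zariski closure_of {x}"
  then have "y \<in> L" using closure_of_subset_topspace by fastforce
  have "a \<in> x" if "a \<in> y" for a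
  proof -
    have "openin zariski (basic_open {a})"
      using \<open>y \<in> L\<close> that subset_Pow by (intro openin_basic_open) auto
    moreover have "y \<in> basic_open {a}" using \<open>y \<in> L\<close> that by simp
    ultimately have "x \<in> basic_open {a}" using y unfolding in_closure_of by blast
    then show "a \<in> x" by simp
  qed
  with \<open>y \<in> L\<close> show "y \<in> {y \<in> L. y \<subseteq> x}" by blast
next
  fix y assume "y \<in> {y \<in> L. y \<subseteq> x}"
  then have "y \<in> L" "y \<subseteq> x" by auto
  then have "x \<in> U" if "openin zariski U" "y \<in> U" for U
    using openin_zariski_upward[OF that] assms by blast
  with \<open>y \<in> L\<close> show "y \<in> zariski closure_of {x}"
    unfolding in_closure_of by auto
qed

lemma closure_of_singleton_subtopology_zariski:
  assumes "K \<subseteq> L" "x \<in> K"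
  shows "subtopology zariski K closure_of {x} = {y \<in> K. y \<subseteq> x}"
proof -
  have "K \<inter> {x} = {x}" "x \<in> L" using assms by auto
  then show ?thesis
    using assms(1) by (simp add: closure_of_subtopology closure_of_singleton_zariski) blast
qed

lemma specializes_zariski_iff:
  "y \<in> L \<Longrightarrow> m \<in> L \<Longrightarrow> specializes zariski y m \<longleftrightarrow> m \<subseteq> y"
  by (simp add: specializes_def closure_of_singleton_zariski)

lemma t0_space_zariski: "t0_space zariski"
  unfolding t0_space_def topspace_zariski
proof (intro ballI impI)
  fix x y assume "x \<in> L" "y \<in> L" "x \<noteq> y"
  then obtain a where a: "a \<in> x \<and> a \<notin> y \<or> a \<in> y \<and> a \<notin> x" by blast
  then have "openin zariski (basic_open {a})"
    using \<open>x \<in> L\<close> \<open>y \<in> L\<close> subset_Pow by (intro openin_basic_open) auto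
  moreover have "x \<notin> basic_open {a} \<longleftrightarrow> y \<in> basic_open {a}"
    using a \<open>x \<in> L\<close> \<open>y \<in> L\<close> by auto
  ultimately show "\<exists>U. openin zariski U \<and> (x \<notin> U \<longleftrightarrow> y \<in> U)" by blast
qed

lemma closedin_zariski_Diff_basic_open:
  "finite G \<Longrightarrow> G \<subseteq> S \<Longrightarrow> closedin zariski (L - basic_open G)"
  using closedin_diff[OF closedin_topspace openin_basic_open] by simp

lemma irreducible_in_zariski_finite_subset:
  assumes "irreducible_in zariski C" "finite F" "F \<subseteq> \<Union>C"
  shows "\<exists>D\<in>C. F \<subseteq> D"
  using assms(2,3)
proof (induction F rule: finite_induct)
  case empty
  then show ?case using assms(1) by (auto simp: irreducible_in_def)
next
  case (insert a F)
  have "C \<subseteq> L" using assms(1) by (simp add: irreducible_in_def)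
  then have "\<Union>C \<subseteq> S" using subset_Pow by blast
  obtain D1 where D1: "D1 \<in> C" "a \<in> D1" using insert.prems by blast
  obtain D2 where D2: "D2 \<in> C" "F \<subseteq> D2" using insert by blast
  show ?case
  proof (rule ccontr)
    assume "\<not> (\<exists>D\<in>C. insert a F \<subseteq> D)"
    with \<open>C \<subseteq> L\<close> have "C \<subseteq> (L - basic_open {a}) \<union> (L - basic_open F)" by auto
    moreover have "closedin zariski (L - basic_open {a})" "closedin zariski (L - basic_open F)"
      using insert \<open>\<Union>C \<subseteq> S\<close> by (auto intro!: closedin_zariski_Diff_basic_open)
    ultimately have "C \<subseteq> L - basic_open {a} \<or> C \<subseteq> L - basic_open F"
      using assms(1) unfolding irreducible_in_def by blast
    then show False using D1 D2 \<open>C \<subseteq> L\<close> by auto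
  qed
qed

end

locale closure_system = set_system +
  assumes top_in: "S \<in> L"
    and Inter_in: "\<And>M. M \<subseteq> L \<Longrightarrow> M \<noteq> {} \<Longrightarrow> \<Inter>M \<in> L"
begin

abbreviation cl :: "'a set \<Rightarrow> 'a set" where
  "cl \<equiv> lat_closure S L"

abbreviation finitely_generated :: "'a set set" where
  "finitely_generated \<equiv> finitely_generated_elems S L"

lemma lat_closure_in: "F \<subseteq> S \<Longrightarrow> cl F \<in> L"
proof -
  assume "F \<subseteq> S"
  then have "\<Inter>{A \<in> L. F \<subseteq> A} \<in> L" "\<Inter>{A \<in> L. F \<subseteq> A} \<subseteq> S"
    using top_in by (auto intro: Inter_in)
  then show "cl F \<in> L" by (simp add: lat_closure_def Int_absorb1)
qed

lemma lat_closure_subset: "F \<subseteq> S \<Longrightarrow> F \<subseteq> cl F"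
  by (auto simp: lat_closure_def)

lemma lat_closure_least: "A \<in> L \<Longrightarrow> F \<subseteq> A \<Longrightarrow> cl F \<subseteq> A"
  by (auto simp: lat_closure_def)

lemma lat_closure_mono: "G \<subseteq> S \<Longrightarrow> F \<subseteq> G \<Longrightarrow> cl F \<subseteq> cl G"
  by (meson lat_closure_in lat_closure_least lat_closure_subset order_trans)

lemma lat_closure_in_basic_open: "G \<subseteq> S \<Longrightarrow> cl G \<in> basic_open G"
  by (simp add: lat_closure_in lat_closure_subset)

lemma finitely_generated_eq: "finitely_generated = {cl F | F. finite F \<and> F \<subseteq> S}"
  unfolding finitely_generated_elems_def using lat_closure_in by blast

lemma basic_open_subset_openin:
  assumes "G \<subseteq> S" "openin zariski U" "cl G \<in> U"
  shows "basic_open G \<subseteq> U"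
  using openin_zariski_upward[OF assms(2,3)] lat_closure_least by auto

lemma compactin_basic_open:
  assumes "G \<subseteq> S"
  shows "compactin zariski (basic_open G)"
  unfolding compactin_def
proof (intro conjI allI impI)
  show "basic_open G \<subseteq> topspace zariski" by auto
  fix \<U> assume "(\<forall>U\<in>\<U>. openin zariski U) \<and> basic_open G \<subseteq> \<Union>\<U>"
  then obtain U where "U \<in> \<U>" "openin zariski U" "cl G \<in> U"
    using lat_closure_in_basic_open[OF assms] by blast
  moreover from this have "basic_open G \<subseteq> U" using basic_open_subset_openin[OF assms] by blast
  ultimately show "\<exists>\<F>. finite \<F> \<and> \<F> \<subseteq> \<U> \<and> basic_open G \<subseteq> \<Union>\<F>"
    by (intro exI[of _ "{U}"]) simp
qed

lemma limitin_zariski_lat_closure: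
  assumes "A \<in> L"
  shows "limitin zariski cl A (finite_subsets_at_top A)"
  unfolding zariski_topology_eq
proof (rule limitin_topology_generated_by)
  have "A \<in> basic_open {}" using assms by simp
  then show "A \<in> \<Union>basic_opens" by blast
next
  fix U assume "U \<in> basic_opens" "A \<in> U"
  then obtain G where "finite G" "G \<subseteq> A" "U = basic_open G" by auto
  moreover have "cl F \<in> basic_open G" if "G \<subseteq> F" "F \<subseteq> A" for F
  proof -
    have "F \<subseteq> S" using that(2) assms subset_Pow by blast
    then show ?thesis using that(1) lat_closure_in[of F] lat_closure_subset[of F] by auto
  qed
  ultimately show "eventually (\<lambda>F. cl F \<in> U) (finite_subsets_at_top A)"
    unfolding eventually_finite_subsets_at_top by blast
qed

lemma openin_zariski_basic_open_subset:
  assumes "openin zariski U" "A \<in> U"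
  obtains G where "finite G" "G \<subseteq> S" "A \<in> basic_open G" "basic_open G \<subseteq> U"
proof -
  have "A \<in> L" using assms openin_subset by fastforce
  then have "eventually (\<lambda>F. cl F \<in> U) (finite_subsets_at_top A)"
    using limitinD[OF limitin_zariski_lat_closure assms] by simp
  then obtain G where "finite G" "G \<subseteq> A" "cl G \<in> U"
    unfolding eventually_finite_subsets_at_top by blast
  moreover have "G \<subseteq> S" using \<open>G \<subseteq> A\<close> \<open>A \<in> L\<close> subset_Pow by blast
  ultimately show thesis
    using that basic_open_subset_openin assms(1) \<open>A \<in> L\<close> by simp
qed

lemma compactin_basic_opens: "U \<in> basic_opens \<Longrightarrow> compactin zariski U"
  by (auto simp: compactin_basic_open)

lemma compact_openin_zariski_finite_Union:
  assumes "openin zariski U" "compactin zariski U"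
  obtains \<F> where "finite \<F>" "\<F> \<subseteq> basic_opens" "U = \<Union>\<F>"
proof -
  let ?\<V> = "{V \<in> basic_opens. V \<subseteq> U}"
  have "U \<subseteq> \<Union>?\<V>"
  proof
    fix A assume "A \<in> U"
    with assms(1) obtain G where "finite G" "G \<subseteq> S" "A \<in> basic_open G" "basic_open G \<subseteq> U"
      by (rule openin_zariski_basic_open_subset)
    then have "basic_open G \<in> ?\<V>" by blast
    with \<open>A \<in> basic_open G\<close> show "A \<in> \<Union>?\<V>" by (rule UnionI[rotated])
  qed
  moreover have "\<forall>V\<in>?\<V>. openin zariski V" using openin_basic_open by blast
  ultimately obtain \<F> where "finite \<F>" "\<F> \<subseteq> ?\<V>" "U \<subseteq> \<Union>\<F>"
    using assms(2) unfolding compactin_def by meson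
  moreover from \<open>\<F> \<subseteq> ?\<V>\<close> have "\<F> \<subseteq> basic_opens" "\<Union>\<F> \<subseteq> U" by auto
  ultimately show thesis by (intro that) auto
qed

lemma compactin_Int_zariski:
  assumes "openin zariski U" "compactin zariski U" "openin zariski V" "compactin zariski V"
  shows "compactin zariski (U \<inter> V)"
proof -
  obtain \<F> where \<F>: "finite \<F>" "\<F> \<subseteq> basic_opens" "U = \<Union>\<F>"
    using assms(1,2) by (rule compact_openin_zariski_finite_Union)
  obtain \<G> where \<G>: "finite \<G>" "\<G> \<subseteq> basic_opens" "V = \<Union>\<G>"
    using assms(3,4) by (rule compact_openin_zariski_finite_Union)
  have "U \<inter> V = \<Union>((\<lambda>(X, Y). X \<inter> Y) ` (\<F> \<times> \<G>))"
    using \<F>(3) \<G>(3) by blast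
  also have "compactin zariski \<dots>"
  proof (rule compactin_Union)
    show "finite ((\<lambda>(X, Y). X \<inter> Y) ` (\<F> \<times> \<G>))" using \<F>(1) \<G>(1) by simp
    fix W assume "W \<in> (\<lambda>(X, Y). X \<inter> Y) ` (\<F> \<times> \<G>)"
    then obtain X Y where "X \<in> \<F>" "Y \<in> \<G>" "W = X \<inter> Y" by blast
    have "X \<in> basic_opens" using \<open>X \<in> \<F>\<close> \<F>(2) by (rule rev_subsetD)
    moreover have "Y \<in> basic_opens" using \<open>Y \<in> \<G>\<close> \<G>(2) by (rule rev_subsetD)
    ultimately show "compactin zariski W"
      unfolding \<open>W = X \<inter> Y\<close> by (intro compactin_basic_opens basic_opens_Int)
  qed
  finally show ?thesis .
qed

lemma locally_with_maximum_zariski: "locally_with_maximum zariski"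
  unfolding locally_with_maximum_def
proof (intro allI impI)
  fix A U assume "openin zariski U \<and> A \<in> U"
  then have "openin zariski U" "A \<in> U" by auto
  then obtain G where G: "finite G" "G \<subseteq> S" "A \<in> basic_open G" "basic_open G \<subseteq> U"
    by (rule openin_zariski_basic_open_subset)
  have "openin zariski (basic_open G)" using G(1,2) by (rule openin_basic_open)
  moreover have "cl G \<in> basic_open G" using G(2) by (rule lat_closure_in_basic_open)
  moreover have "\<forall>B\<in>basic_open G. specializes zariski B (cl G)"
    using G(2) by (simp add: specializes_zariski_iff lat_closure_in lat_closure_least)
  ultimately show "\<exists>V. openin zariski V \<and> A \<in> V \<and> V \<subseteq> U \<and> (\<exists>m\<in>V. \<forall>B\<in>V. specializes zariski B m)"
    using G(3,4) by blast
qed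

lemma limitin_constructible_lat_closure:
  assumes "A \<in> L"
  shows "limitin (constructible_topology zariski) cl A (finite_subsets_at_top A)"
  unfolding constructible_topology_def
proof (rule limitin_topology_generated_by)
  show "A \<in> \<Union>({topspace zariski} \<union> {U. openin zariski U \<and> compactin zariski U} \<union>
      {topspace zariski - U | U. openin zariski U \<and> compactin zariski U})"
    using assms by (intro UnionI[of "topspace zariski"]) auto
next
  have below: "cl F \<in> L \<and> cl F \<subseteq> A" if "F \<subseteq> A" for F
  proof
    show "cl F \<in> L" using that assms subset_Pow by (blast intro: lat_closure_in)
    show "cl F \<subseteq> A" using assms that by (rule lat_closure_least)
  qed
  fix V assume V: "V \<in> {topspace zariski} \<union> {U. openin zariski U \<and> compactin zariski U} \<union>
      {topspace zariski - U | U. openin zariski U \<and> compactin zariski U}" and "A \<in> V"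
  then consider "V = L" | "openin zariski V" | U where "openin zariski U" "V = L - U"
    unfolding topspace_zariski by blast
  then show "eventually (\<lambda>F. cl F \<in> V) (finite_subsets_at_top A)"
  proof cases
    case 1
    then show ?thesis using below by (intro eventually_finite_subsets_at_top_weakI) blast
  next
    case 2
    then show ?thesis using limitinD[OF limitin_zariski_lat_closure[OF assms] _ \<open>A \<in> V\<close>] by simp
  next
    case 3
    have "cl F \<notin> U" if "F \<subseteq> A" for F
      using openin_zariski_upward[OF 3(1) _ assms] below[OF that] \<open>A \<in> V\<close> 3(2) by blast
    then show ?thesis using below 3(2) by (intro eventually_finite_subsets_at_top_weakI) blast
  qed
qed

lemma finitely_generated_subset: "finitely_generated \<subseteq> L"
  by (auto simp: finitely_generated_elems_def)

lemma constructible_closure_of_finitely_generated: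
  "constructible_topology zariski closure_of finitely_generated = L"
proof
  show "constructible_topology zariski closure_of finitely_generated \<subseteq> L"
    using closure_of_subset_topspace[of "constructible_topology zariski"] by simp
  show "L \<subseteq> constructible_topology zariski closure_of finitely_generated"
  proof
    fix A assume "A \<in> L"
    let ?cl_fin = "constructible_topology zariski closure_of finitely_generated"
    have "cl F \<in> ?cl_fin" if "finite F" "F \<subseteq> A" for F
    proof -
      have "F \<subseteq> S" using that(2) \<open>A \<in> L\<close> subset_Pow by blast
      then have "cl F \<in> finitely_generated" using that(1) finitely_generated_eq by blast
      then show ?thesis
        using closure_of_subset[of finitely_generated "constructible_topology zariski"]
          finitely_generated_subset by auto
    qed
    then have "eventually (\<lambda>F. cl F \<in> ?cl_fin) (finite_subsets_at_top A)"
      by (rule eventually_finite_subsets_at_top_weakI)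
    then show "A \<in> ?cl_fin"
      using limitin_closedin[OF limitin_constructible_lat_closure[OF \<open>A \<in> L\<close>] closedin_closure_of]
      by simp
  qed
qed

lemma finitely_generated_eq_if_spectral:
  assumes "spectral_space (subtopology zariski finitely_generated)"
  shows "finitely_generated = L"
proof
  show "finitely_generated \<subseteq> L" by (rule finitely_generated_subset)
  show "L \<subseteq> finitely_generated"
  proof
    fix A assume "A \<in> L"
    let ?X = "subtopology zariski finitely_generated"
    define C where "C = {B \<in> finitely_generated. B \<subseteq> A}"
    have "C = finitely_generated \<inter> zariski closure_of {A}"
      using \<open>A \<in> L\<close> finitely_generated_subset
      by (auto simp: C_def closure_of_singleton_zariski)
    then have "closedin ?X C" by (simp add: closedin_subtopology_Int_closed)
    have fin_below: "cl F \<in> C" if "finite F" "F \<subseteq> A" for F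
    proof -
      have "F \<subseteq> S" using that(2) \<open>A \<in> L\<close> subset_Pow by blast
      then show ?thesis
        using that \<open>A \<in> L\<close> finitely_generated_eq lat_closure_least by (auto simp: C_def)
    qed
    have "irreducible_in ?X C"
    proof (rule irreducible_inI_common_generization)
      show "C \<noteq> {}" using fin_below[of "{}"] by blast
      show "C \<subseteq> topspace ?X" using finitely_generated_subset by (auto simp: C_def)
      fix B1 B2 assume "B1 \<in> C" "B2 \<in> C"
      then obtain F1 F2 where F: "finite F1" "F1 \<subseteq> S" "B1 = cl F1" "finite F2" "F2 \<subseteq> S" "B2 = cl F2"
        and "B1 \<subseteq> A" "B2 \<subseteq> A"
        unfolding C_def finitely_generated_eq by blast
      then have "F1 \<union> F2 \<subseteq> A" using lat_closure_subset by blast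
      then have "cl (F1 \<union> F2) \<in> C" using F by (intro fin_below) auto
      moreover have "B1 \<subseteq> cl (F1 \<union> F2)" "B2 \<subseteq> cl (F1 \<union> F2)"
        using F lat_closure_mono[of "F1 \<union> F2"] by auto
      ultimately show "\<exists>z\<in>C. B1 \<in> ?X closure_of {z} \<and> B2 \<in> ?X closure_of {z}"
        using \<open>B1 \<in> C\<close> \<open>B2 \<in> C\<close> finitely_generated_subset
        by (intro bexI[of _ "cl (F1 \<union> F2)"]) (auto simp: C_def closure_of_singleton_subtopology_zariski)
    qed
    with assms \<open>closedin ?X C\<close> obtain x where "x \<in> C" "C = ?X closure_of {x}"
      unfolding spectral_space_def by blast
    then have C_eq: "C = {B \<in> finitely_generated. B \<subseteq> x}"
      using finitely_generated_subset by (simp add: C_def closure_of_singleton_subtopology_zariski)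
    have "A \<subseteq> x"
    proof
      fix a assume "a \<in> A"
      then have "cl {a} \<in> C" and "{a} \<subseteq> S" using fin_below[of "{a}"] \<open>A \<in> L\<close> subset_Pow by auto
      then show "a \<in> x" unfolding C_eq using lat_closure_subset by blast
    qed
    with \<open>x \<in> C\<close> show "A \<in> finitely_generated" by (auto simp: C_def)
  qed
qed

end

locale algebraic_closure_system = closure_system +
  assumes directed_Union_in:
    "\<And>M. M \<subseteq> L \<Longrightarrow> M \<noteq> {} \<Longrightarrow> (\<forall>A\<in>M. \<forall>B\<in>M. \<exists>C\<in>M. A \<union> B \<subseteq> C) \<Longrightarrow> \<Union>M \<in> L"
begin

lemma UN_lat_closure_finite_subsets_in:
  assumes "X \<subseteq> S"
  shows "(\<Union>F\<in>{F. finite F \<and> F \<subseteq> X}. cl F) \<in> L"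
proof (rule directed_Union_in)
  let ?M = "cl ` {F. finite F \<and> F \<subseteq> X}"
  have "cl F \<in> L" if "F \<subseteq> X" for F
    using that assms by (simp add: lat_closure_in)
  then show "?M \<subseteq> L" by blast
  show "?M \<noteq> {}" by blast
  show "\<forall>A\<in>?M. \<forall>B\<in>?M. \<exists>C\<in>?M. A \<union> B \<subseteq> C"
  proof (intro ballI)
    fix A B assume "A \<in> ?M" "B \<in> ?M"
    then obtain F1 F2 where F: "finite F1" "F1 \<subseteq> X" "A = cl F1" "finite F2" "F2 \<subseteq> X" "B = cl F2"
      by blast
    then have "F1 \<union> F2 \<subseteq> S" using assms by blast
    then have "A \<union> B \<subseteq> cl (F1 \<union> F2)" using F lat_closure_mono by simp
    moreover have "cl (F1 \<union> F2) \<in> ?M" using F by blast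
    ultimately show "\<exists>C\<in>?M. A \<union> B \<subseteq> C" by blast
  qed
qed

lemma generic_point_zariski:
  assumes "closedin zariski C" "irreducible_in zariski C"
  shows "\<Union>C \<in> C" "C = zariski closure_of {\<Union>C}"
proof -
  have "C \<subseteq> L" using assms(2) by (simp add: irreducible_in_def)
  then have "\<Union>C \<subseteq> S" using subset_Pow by blast
  have fin_in: "cl F \<in> C" if F: "finite F" "F \<subseteq> \<Union>C" for F
  proof -
    obtain D where "D \<in> C" "F \<subseteq> D"
      using irreducible_in_zariski_finite_subset[OF assms(2) F] by blast
    moreover have "cl F \<in> L" using F(2) \<open>\<Union>C \<subseteq> S\<close> by (simp add: lat_closure_in)
    moreover have "D \<in> L" using \<open>D \<in> C\<close> \<open>C \<subseteq> L\<close> by blast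
    ultimately show ?thesis
      using closedin_zariski_downward[OF assms(1)] lat_closure_least by blast
  qed
  have "\<Union>C = (\<Union>F\<in>{F. finite F \<and> F \<subseteq> \<Union>C}. cl F)"
  proof
    show "\<Union>C \<subseteq> (\<Union>F\<in>{F. finite F \<and> F \<subseteq> \<Union>C}. cl F)"
    proof
      fix x assume "x \<in> \<Union>C"
      then have "x \<in> cl {x}" using lat_closure_subset \<open>\<Union>C \<subseteq> S\<close> by blast
      with \<open>x \<in> \<Union>C\<close> show "x \<in> (\<Union>F\<in>{F. finite F \<and> F \<subseteq> \<Union>C}. cl F)"
        by (intro UN_I[of "{x}"]) auto
    qed
    show "(\<Union>F\<in>{F. finite F \<and> F \<subseteq> \<Union>C}. cl F) \<subseteq> \<Union>C"
      using fin_in by blast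
  qed
  then have "\<Union>C \<in> L" using UN_lat_closure_finite_subsets_in[OF \<open>\<Union>C \<subseteq> S\<close>] by simp
  moreover have "eventually (\<lambda>F. cl F \<in> C) (finite_subsets_at_top (\<Union>C))"
    using fin_in by (rule eventually_finite_subsets_at_top_weakI)
  ultimately show "\<Union>C \<in> C"
    using limitin_closedin[OF limitin_zariski_lat_closure assms(1)] by simp
  have "C = {y \<in> L. y \<subseteq> \<Union>C}"
    using \<open>C \<subseteq> L\<close> closedin_zariski_downward[OF assms(1) \<open>\<Union>C \<in> C\<close>] by blast
  then show "C = zariski closure_of {\<Union>C}"
    using \<open>\<Union>C \<in> L\<close> by (simp add: closure_of_singleton_zariski)
qed

lemma spectral_space_zariski: "spectral_space zariski"
  unfolding spectral_space_def
proof (intro conjI allI impI t0_space_zariski)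
  have "topspace zariski = basic_open {}" by auto
  then show "compact_space zariski"
    unfolding compact_space_def using compactin_basic_open[of "{}"] by simp
next
  fix U V assume "openin zariski U \<and> compactin zariski U \<and> openin zariski V \<and> compactin zariski V"
  then show "compactin zariski (U \<inter> V)" by (auto intro: compactin_Int_zariski)
next
  fix U A assume "openin zariski U \<and> A \<in> U"
  then have "openin zariski U" "A \<in> U" by auto
  then obtain G where G: "finite G" "G \<subseteq> S" "A \<in> basic_open G" "basic_open G \<subseteq> U"
    by (rule openin_zariski_basic_open_subset)
  moreover have "openin zariski (basic_open G)" using G(1,2) by (rule openin_basic_open)
  moreover have "compactin zariski (basic_open G)" using G(2) by (rule compactin_basic_open)
  ultimately show "\<exists>V. openin zariski V \<and> compactin zariski V \<and> A \<in> V \<and> V \<subseteq> U" by blast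
next
  fix C assume "closedin zariski C \<and> irreducible_in zariski C"
  then have "closedin zariski C" "irreducible_in zariski C" by auto
  then have "\<Union>C \<in> C" "C = zariski closure_of {\<Union>C}" by (rule generic_point_zariski)+
  then show "\<exists>x\<in>C. C = zariski closure_of {x}" by blast
qed

end

lemma algebraic_closure_system_iff:
  "algebraic_closure_system S L \<longleftrightarrow> algebraic_lattice_of_sets S L"
  unfolding algebraic_closure_system_def algebraic_closure_system_axioms_def closure_system_def
    closure_system_axioms_def set_system_def algebraic_lattice_of_sets_def
  by blast

theorem proposition4p3:
  fixes S :: "'a set" and L :: "'a set set"
  assumes "S \<noteq> {}" and "algebraic_lattice_of_sets S L"
  shows "locally_with_maximum (zariski_topology S L)
    \<and> (constructible_topology (zariski_topology S L)) closure_of (finitely_generated_elems S L) = L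
    \<and> (spectral_space (subtopology (zariski_topology S L) (finitely_generated_elems S L))
         \<longleftrightarrow> finitely_generated_elems S L = L)"
proof -
  interpret algebraic_closure_system S L
    using assms(2) by (simp add: algebraic_closure_system_iff)
  have "spectral_space (subtopology zariski finitely_generated) \<longleftrightarrow> finitely_generated = L"
  proof
    assume "finitely_generated = L"
    then show "spectral_space (subtopology zariski finitely_generated)"
      using spectral_space_zariski subtopology_topspace[of zariski] by simp
  qed (rule finitely_generated_eq_if_spectral)
  then show ?thesis
    using locally_with_maximum_zariski constructible_closure_of_finitely_generated by blast
qed

end
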